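(* For every $\varepsilon>0$ there exists $C_\varepsilon\in\mathbb R$, depending only on $\varepsilon$, $\eta$ and $\Gamma$, such that $$\eta(u)\le\varepsilon\,\Gamma(u)+C_\varepsilon\qquad\text{for all }u\in\bar I_p.$$
   Context: $\eta:\mathbb R_+\to\mathbb R_+$ is continuous, $\eta(0)=0$, $\eta(u)>0$ for $u\ne0$, nondecreasing on $\mathbb R_+$, and extended to $\mathbb R$ as an even function. $p\in L^1_{loc}(\mathbb R_+)$ is absolutely continuous and increasing on $(0,\infty)$, $p(u)\to+\infty$ as $u\to+\infty$; if $p(0):=\lim_{u\downarrow0}p(u)$ is finite, $p(u)=2p(0)-p(-u)$ for $u\le0$. $I_p=(0,\infty)$ if $p(0)=-\infty$, $I_p=\mathbb R$ otherwise, with closure $\bar I_p$. $\Gamma(u)=\int_1^u(p(a)-p(1))da$ on $\bar I_p$. Assumption: $\Gamma(u)/\eta(u)\to+\infty$ as $u\to+\infty$. *)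

theory Defs
  imports "HOL-Analysis.Analysis"
begin

definition abs_cont_on :: "real set \<Rightarrow> (real \<Rightarrow> real) \<Rightarrow> bool" where
  "abs_cont_on S f \<longleftrightarrow>
     (\<forall>e>0. \<exists>d>0. \<forall>(n::nat) (a::nat\<Rightarrow>real) b.
        (\<forall>i<n. a i \<in> S \<and> b i \<in> S \<and> a i \<le> b i) \<and>
        disjoint_family_on (\<lambda>i. {a i<..<b i}) {..<n} \<and>
        (\<Sum>i<n. b i - a i) < d \<longrightarrow> (\<Sum>i<n. \<bar>f (b i) - f (a i)\<bar>) < e)"

definition p0_finite :: "(real \<Rightarrow> real) \<Rightarrow> bool" where
  "p0_finite p \<longleftrightarrow> (\<exists>L. (p \<longlongrightarrow> L) (at_right 0))"

text \<open>Closure of I_p: R if p(0) finite, [0,oo) if p(0) = -oo.\<close>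
definition Ip_bar :: "(real \<Rightarrow> real) \<Rightarrow> real set" where
  "Ip_bar p = (if p0_finite p then UNIV else {0..})"

definition Gamma :: "(real \<Rightarrow> real) \<Rightarrow> real \<Rightarrow> real" where
  "Gamma p u = (if 1 \<le> u then integral {1..u} (\<lambda>a. p a - p 1)
                else - integral {u..1} (\<lambda>a. p a - p 1))"

end

theory Submission
  imports Defs "HOL-Analysis.Equivalence_Measurable_On_Borel"
begin

text \<open>The growth hypothesis gives \<open>\<eta> \<le> \<epsilon> \<Gamma>\<close> for \<open>u \<ge> M\<close>. On \<open>[-M, M]\<close>, \<open>\<eta> \<le> \<eta>(M)\<close> by
  evenness and monotonicity, while \<open>\<Gamma> \<ge> 0\<close> because the integrand \<open>p(a) - p(1)\<close> has the sign
  of \<open>a - 1\<close>. For \<open>u \<le> -M\<close> (only possible when \<open>p(0)\<close> is finite) the odd reflection of \<open>p\<close>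
  about \<open>p(0) \<le> p(1)\<close> gives \<open>\<Gamma>(u) \<ge> \<Gamma>(-u)\<close>, so the estimate at \<open>-u\<close> transfers. Hence
  \<open>C\<^sub>\<epsilon> = \<eta>(M)\<close> works.\<close>

lemma mono_odd_extension:
  fixes p :: "real \<Rightarrow> real"
  assumes mono: "mono_on {0<..} p"
    and lim: "(p \<longlongrightarrow> p 0) (at_right 0)"
    and odd: "\<forall>u\<le>0. p u = 2 * p 0 - p (- u)"
  shows "mono p"
proof -
  have p0_le: "p 0 \<le> p x" if "0 \<le> x" for x
  proof (cases "x = 0")
    case False
    then have "eventually (\<lambda>y. p y \<le> p x) (at_right 0)"
      unfolding eventually_at_right_field using that
      by (intro exI[of _ x]) (auto intro: mono_onD[OF mono])
    then show ?thesis using tendsto_upperbound[OF lim] by simp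
  qed simp
  have nonneg: "p x \<le> p y" if "0 \<le> x" "x \<le> y" for x y
    using that p0_le mono_onD[OF mono, of x y] by (cases "x = 0") auto
  show ?thesis
  proof (rule monoI)
    fix x y :: real assume "x \<le> y"
    consider "0 \<le> x" | "x < 0" "0 \<le> y" | "y < 0" by linarith
    then show "p x \<le> p y"
    proof cases
      case 1 then show ?thesis using nonneg \<open>x \<le> y\<close> by blast
    next
      case 2 then show ?thesis using odd[rule_format, of x] p0_le[of "- x"] p0_le[of y] by simp
    next
      case 3 then show ?thesis using odd[rule_format, of x] odd[rule_format, of y] nonneg[of "- y" "- x"] \<open>x \<le> y\<close> by simp
    qed
  qed
qed

text \<open>No integrability is needed: a non-integrable integrand has integral \<open>0\<close>.\<close>

lemma Gamma_nonneg:
  fixes p :: "real \<Rightarrow> real"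
  assumes above: "\<And>a. 1 < a \<Longrightarrow> a < u \<Longrightarrow> p 1 \<le> p a"
    and below: "\<And>a. u < a \<Longrightarrow> a < 1 \<Longrightarrow> p a \<le> p 1"
  shows "0 \<le> Gamma p u"
proof -
  have nonneg_integral: "0 \<le> integral S f" if "\<And>x. x \<in> S \<Longrightarrow> 0 \<le> f x" for S and f :: "real \<Rightarrow> real"
    using integral_nonneg[of f S] not_integrable_integral[of f S] that by fastforce
  show ?thesis
  proof (cases "1 \<le> u")
    case True
    have "0 \<le> integral {1<..<u} (\<lambda>a. p a - p 1)"
      by (rule nonneg_integral) (use above in auto)
    then show ?thesis using True by (simp add: Gamma_def integral_open_interval_real)
  next
    case False
    have "0 \<le> integral {u<..<1} (\<lambda>a. p 1 - p a)"
      by (rule nonneg_integral) (use below in auto)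
    then show ?thesis
      using False integral_neg[where f="\<lambda>a. p a - p 1" and S="{u<..<1}"]
      by (simp add: Gamma_def integral_open_interval_real)
  qed
qed

lemma Gamma_le_Gamma_reflect:
  fixes p :: "real \<Rightarrow> real"
  assumes mono: "mono p"
    and balance: "\<And>a. 1 \<le> a \<Longrightarrow> p a + p (- a) \<le> 2 * p 1"
    and v: "1 \<le> v"
  shows "Gamma p v \<le> Gamma p (- v)"
proof -
  let ?g = "\<lambda>a. p a - p 1"
  have int: "?g integrable_on {a..b}" for a b
    using mono by (intro integrable_diff integrable_const_ivl integrable_on_mono_on)
      (auto intro: mono_on_subset)
  have "integral {-1..1} ?g \<le> integral {-1..1} (\<lambda>a::real. 0)"
    using int[of "-1" 1] by (intro Henstock_Kurzweil_Integration.integral_le) (auto intro: monoD[OF mono])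
  moreover have "integral {-v..-1} ?g \<le> integral {-v..-1} (\<lambda>a. p 1 - p (- a))"
  proof (rule Henstock_Kurzweil_Integration.integral_le[OF int])
    show "(\<lambda>a. p 1 - p (- a)) integrable_on {-v..-1}"
      using integrable_neg[OF int[of 1 v]]
        Henstock_Kurzweil_Integration.integrable_reflect_real[where f="\<lambda>b. p 1 - p b" and a=1 and b=v] by simp
    show "?g a \<le> p 1 - p (- a)" if "a \<in> {-v..-1}" for a
      using balance[of "- a"] that by simp
  qed
  moreover have "integral {-v..-1} (\<lambda>a. p 1 - p (- a)) = - integral {1..v} ?g"
    using integral_neg[where f="?g" and S="{1..v}"]
      Henstock_Kurzweil_Integration.integral_reflect_real[where f="\<lambda>b. p 1 - p b" and a=1 and b=v]
    by simp
  moreover have "integral {-v..-1} ?g + integral {-1..1} ?g = integral {-v..1} ?g"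
    using v by (intro Henstock_Kurzweil_Integration.integral_combine int) auto
  ultimately show ?thesis
    using v by (simp add: Gamma_def)
qed

lemma eventually_le_mult_of_ratio_at_top:
  fixes f g :: "real \<Rightarrow> real"
  assumes ratio: "filterlim (\<lambda>u. f u / g u) at_top at_top"
    and pos: "eventually (\<lambda>u. 0 < g u) at_top"
    and e: "0 < \<epsilon>"
  shows "eventually (\<lambda>u. g u \<le> \<epsilon> * f u) at_top"
proof -
  have "eventually (\<lambda>u. 1 / \<epsilon> \<le> f u / g u) at_top"
    using ratio by (simp add: filterlim_at_top)
  with pos show ?thesis
    by eventually_elim (use e in \<open>simp add: field_simps\<close>)
qed

lemma Gamma_nonneg_on_Ip_bar:
  fixes p :: "real \<Rightarrow> real"
  assumes mono_pos: "mono_on {0<..} p"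
    and mono_fin: "p0_finite p \<Longrightarrow> mono p"
    and u: "u \<in> Ip_bar p"
  shows "0 \<le> Gamma p u"
proof (rule Gamma_nonneg)
  show "p 1 \<le> p a" if "1 < a" for a
    using that by (intro mono_onD[OF mono_pos]) auto
  show "p a \<le> p 1" if "u < a" "a < 1" for a
    using that u mono_fin mono_onD[OF mono_pos, of a 1]
    by (cases "p0_finite p") (auto simp: Ip_bar_def monoD)
qed

lemma Gamma_reflect_le_on_Ip_bar:
  fixes p :: "real \<Rightarrow> real"
  assumes mono_fin: "p0_finite p \<Longrightarrow> mono p"
    and ext: "p0_finite p \<Longrightarrow> (p \<longlongrightarrow> p 0) (at_right 0) \<and> (\<forall>u\<le>0. p u = 2 * p 0 - p (- u))"
    and u: "u \<in> Ip_bar p" "u \<le> - 1"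
  shows "Gamma p (- u) \<le> Gamma p u"
proof -
  from u have fin: "p0_finite p" by (auto simp: Ip_bar_def split: if_splits)
  have "Gamma p (- u) \<le> Gamma p (- (- u))"
  proof (rule Gamma_le_Gamma_reflect[OF mono_fin[OF fin]])
    fix a :: real assume "1 \<le> a"
    then show "p a + p (- a) \<le> 2 * p 1"
      using conjunct2[OF ext[OF fin], rule_format, of "- a"] monoD[OF mono_fin[OF fin], of 0 1]
      by simp
  qed (use u in simp)
  then show ?thesis by simp
qed

lemma even_le_mult_plus_const:
  fixes \<eta> G :: "real \<Rightarrow> real"
  assumes even: "\<And>u. \<eta> (- u) = \<eta> u"
    and mono: "mono_on {0..} \<eta>"
    and large: "\<And>u. M \<le> u \<Longrightarrow> \<eta> u \<le> \<epsilon> * G u"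
    and nonneg: "\<And>u. u \<in> S \<Longrightarrow> 0 \<le> G u"
    and reflect: "\<And>u. u \<in> S \<Longrightarrow> u \<le> - M \<Longrightarrow> G (- u) \<le> G u"
    and "0 \<le> \<epsilon>" "0 \<le> \<eta> M"
    and u: "u \<in> S"
  shows "\<eta> u \<le> \<epsilon> * G u + \<eta> M"
proof -
  have "0 \<le> \<epsilon> * G u" using nonneg[OF u] \<open>0 \<le> \<epsilon>\<close> by simp
  consider "M \<le> u" | "\<bar>u\<bar> \<le> M" | "u \<le> - M" by linarith
  then show ?thesis
  proof cases
    case 1 then show ?thesis using large[of u] \<open>0 \<le> \<eta> M\<close> by simp
  next
    case 2
    have "\<eta> u = \<eta> \<bar>u\<bar>" using even[of u] by (cases "0 \<le> u") auto
    also have "\<dots> \<le> \<eta> M" using 2 by (intro mono_onD[OF mono]) auto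
    finally show ?thesis using \<open>0 \<le> \<epsilon> * G u\<close> by linarith
  next
    case 3
    have "\<eta> u = \<eta> (- u)" by (rule even[symmetric])
    also have "\<dots> \<le> \<epsilon> * G (- u)" using 3 by (intro large) simp
    also have "\<dots> \<le> \<epsilon> * G u" using reflect[OF u 3] \<open>0 \<le> \<epsilon>\<close> by (rule mult_left_mono)
    finally show ?thesis using \<open>0 \<le> \<eta> M\<close> by simp
  qed
qed

theorem lemma3p3:
  fixes \<eta> p :: "real \<Rightarrow> real"
  assumes eta_cont: "continuous_on {0..} \<eta>"
    and eta0: "\<eta> 0 = 0"
    and eta_pos: "\<And>u. u > 0 \<Longrightarrow> \<eta> u > 0"
    and eta_mono: "mono_on {0..} \<eta>"
    and eta_even: "\<And>u. \<eta> (- u) = \<eta> u"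
    and p_loc_int: "\<And>b. b > 0 \<Longrightarrow> p integrable_on {0..b}"
    and p_ac: "\<And>a b. 0 < a \<Longrightarrow> abs_cont_on {a..b} p"
    and p_incr: "strict_mono_on {0<..} p"
    and p_top: "filterlim p at_top at_top"
    and p_ext: "p0_finite p \<Longrightarrow> (p \<longlongrightarrow> p 0) (at_right 0) \<and> (\<forall>u\<le>0. p u = 2 * p 0 - p (- u))"
    and growth: "filterlim (\<lambda>u. Gamma p u / \<eta> u) at_top at_top"
  shows "\<forall>\<epsilon>>0. \<exists>C::real. \<forall>u\<in>Ip_bar p. \<eta> u \<le> \<epsilon> * Gamma p u + C"
proof (intro allI impI)
  fix \<epsilon> :: real assume "\<epsilon> > 0"
  have mono_pos: "mono_on {0<..} p"
    using p_incr by (rule strict_mono_on_imp_mono_on)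
  have mono_fin: "mono p" if "p0_finite p"
    using p_ext[OF that] by (intro mono_odd_extension[OF mono_pos]) blast+
  have "eventually (\<lambda>u. \<eta> u \<le> \<epsilon> * Gamma p u) at_top"
    using eventually_mono[OF eventually_gt_at_top[of 0] eta_pos]
    by (rule eventually_le_mult_of_ratio_at_top[OF growth _ \<open>\<epsilon> > 0\<close>])
  then obtain M where "1 \<le> M" and large: "\<And>u. M \<le> u \<Longrightarrow> \<eta> u \<le> \<epsilon> * Gamma p u"
    unfolding eventually_at_top_linorder by (metis max.bounded_iff max.cobounded2)
  have "0 \<le> \<eta> M" using eta_pos[of M] \<open>1 \<le> M\<close> by simp
  show "\<exists>C. \<forall>u\<in>Ip_bar p. \<eta> u \<le> \<epsilon> * Gamma p u + C"
  proof (intro exI ballI)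
    fix u assume "u \<in> Ip_bar p"
    show "\<eta> u \<le> \<epsilon> * Gamma p u + \<eta> M"
    proof (rule even_le_mult_plus_const[OF eta_even eta_mono large])
      show "Gamma p (- v) \<le> Gamma p v" if "v \<in> Ip_bar p" "v \<le> - M" for v
        using that \<open>1 \<le> M\<close> by (intro Gamma_reflect_le_on_Ip_bar[OF mono_fin p_ext]) auto
    qed (use Gamma_nonneg_on_Ip_bar[OF mono_pos mono_fin] \<open>\<epsilon> > 0\<close> \<open>0 \<le> \<eta> M\<close> \<open>u \<in> Ip_bar p\<close> in auto)
  qed
qed

end
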